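(* Let $\lambda\in\mathbb R$. Each column sum of the matrix representing $(L^*+\lambda)^2$ with respect to the ordered basis $u^*_0,u^*_1,\dots,u^*_d$ of $\mathcal P_d(\mathbb R)$ equals $\lambda^2$.
   Context: Fix an integer $d\ge0$ and $r,s\in(-1,\infty)$. Write $(x)_i=x(x+1)\cdots(x+i-1)$, $(x)_0=1$. For $0\le i\le d$ put $\theta_i=(d-i)(d-i+r+s+1)$ (distinct) and $\theta^*_i=i$. Put $b^*_i=\frac{(d-i)(i-d-s)(2d-2i+r+s+2)_i}{(2d-2i+r+s)_{i+1}}$ ($0\le i\le d-1$), $c^*_i=\frac{i(i-d-r-1)(d-i+r+s+1)_{d-i}}{(d-i+r+s+2)_{d-i+1}}$ ($1\le i\le d$), $b^*_d=c^*_0=0$, $a^*_i=\theta^*_0-b^*_i-c^*_i$, $k^*_i=\frac{b^*_0\cdots b^*_{i-1}}{c^*_1\cdots c^*_i}$ ($0\le i\le d$). Put $c_i=i(i+r)$ and $\nu=\frac{\prod_{j=1}^d(\theta_0-\theta_j)}{c_1\cdots c_d}$. Let $\mathcal P_d(\mathbb R)$ be the real polynomials of degree at most $d$, each determined by its values at $\theta_0,\dots,\theta_d$. Let $L^*$ be the linear map on $\mathcal P_d(\mathbb R)$ with $(L^*f)(\theta_i)=b^*_i f(\theta_{i+1})+a^*_i f(\theta_i)+c^*_i f(\theta_{i-1})$ ($0\le i\le d$; terms with coefficient $b^*_d$ or $c^*_0$ omitted). Let $u^*_i\in\mathcal P_d(\mathbb R)$ be defined by $u^*_i(\theta_j)=0$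 for $j\neq i$ and $u^*_i(\theta_i)=\nu/k^*_i$; these form a basis. $\lambda$ denotes $\lambda$ times the identity map. *)

theory Defs
  imports Complex_Main "HOL-Computational_Algebra.Polynomial"
begin

text \<open>Polynomials in P_d(R) are elements of type real poly of degree at most d.
  All quantities depend on the fixed parameters d, r, s.\<close>

definition theta :: "nat \<Rightarrow> real \<Rightarrow> real \<Rightarrow> nat \<Rightarrow> real" where
  "theta d r s i = real (d - i) * (real (d - i) + r + s + 1)"

definition thetaS :: "nat \<Rightarrow> real" where
  "thetaS i = real i"

definition bS :: "nat \<Rightarrow> real \<Rightarrow> real \<Rightarrow> nat \<Rightarrow> real" where
  "bS d r s i = (if i < d then
     (real (d - i) * (real i - real d - s) * pochhammer (2 * real (d - i) + r + s + 2) i)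
       / pochhammer (2 * real (d - i) + r + s) (i + 1)
   else 0)"

definition cS :: "nat \<Rightarrow> real \<Rightarrow> real \<Rightarrow> nat \<Rightarrow> real" where
  "cS d r s i = (if 1 \<le> i \<and> i \<le> d then
     (real i * (real i - real d - r - 1) * pochhammer (real (d - i) + r + s + 1) (d - i))
       / pochhammer (real (d - i) + r + s + 2) (d - i + 1)
   else 0)"

definition aS :: "nat \<Rightarrow> real \<Rightarrow> real \<Rightarrow> nat \<Rightarrow> real" where
  "aS d r s i = thetaS 0 - bS d r s i - cS d r s i"

definition kS :: "nat \<Rightarrow> real \<Rightarrow> real \<Rightarrow> nat \<Rightarrow> real" where
  "kS d r s i = (\<Prod>j<i. bS d r s j) / (\<Prod>j\<in>{1..i}. cS d r s j)"

definition cc :: "real \<Rightarrow> nat \<Rightarrow> real" where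
  "cc r i = real i * (real i + r)"

definition nu :: "nat \<Rightarrow> real \<Rightarrow> real \<Rightarrow> real" where
  "nu d r s = (\<Prod>j\<in>{1..d}. theta d r s 0 - theta d r s j) / (\<Prod>j\<in>{1..d}. cc r j)"

definition interp :: "nat \<Rightarrow> real \<Rightarrow> real \<Rightarrow> (nat \<Rightarrow> real) \<Rightarrow> real poly" where
  "interp d r s v = (\<Sum>i\<le>d. smult (v i / (\<Prod>k\<in>{..d} - {i}. theta d r s i - theta d r s k))
                                 (\<Prod>k\<in>{..d} - {i}. [:- theta d r s k, 1:]))"

text \<open>The map L^* (the terms with coefficient b_d^* = 0 or c_0^* = 0 vanish).\<close>
definition Lstar :: "nat \<Rightarrow> real \<Rightarrow> real \<Rightarrow> real poly \<Rightarrow> real poly" where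
  "Lstar d r s f = interp d r s (\<lambda>i.
       bS d r s i * poly f (theta d r s (i + 1))
     + aS d r s i * poly f (theta d r s i)
     + cS d r s i * poly f (theta d r s (i - 1)))"

definition Lplus :: "nat \<Rightarrow> real \<Rightarrow> real \<Rightarrow> real \<Rightarrow> real poly \<Rightarrow> real poly" where
  "Lplus d r s lam f = Lstar d r s f + smult lam f"

definition uS :: "nat \<Rightarrow> real \<Rightarrow> real \<Rightarrow> nat \<Rightarrow> real poly" where
  "uS d r s i = interp d r s (\<lambda>j. if j = i then nu d r s / kS d r s i else 0)"

end

theory Submission
  imports Defs
begin

text \<open>Put \<open>\<phi>(f) = (\<Sum>\<^sub>i k\<^sup>*\<^sub>i f(\<theta>\<^sub>i)) / \<nu>\<close>. Since \<open>u\<^sup>*\<^sub>i\<close> vanishes at every \<open>\<theta>\<^sub>j\<close> with \<open>j \<noteq> i\<close> and takes the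
  value \<open>\<nu>/k\<^sup>*\<^sub>i\<close> at \<open>\<theta>\<^sub>i\<close>, \<open>\<phi>\<close> is the sum of the coordinates in the basis \<open>u\<^sup>*\<^sub>0, \<dots>, u\<^sup>*\<^sub>d\<close>, so
  the column sums of a matrix representing an operator \<open>T\<close> are the values \<open>\<phi>(T u\<^sup>*\<^sub>j)\<close>.
  The weights satisfy the detailed balance relation \<open>k\<^sup>*\<^sub>i c\<^sup>*\<^sub>i = k\<^sup>*\<^sub>i\<^sub>-\<^sub>1 b\<^sup>*\<^sub>i\<^sub>-\<^sub>1\<close>, and the rows of the
  tridiagonal matrix defining \<open>L\<^sup>*\<close> sum to \<open>\<theta>\<^sup>*\<^sub>0 = 0\<close>; summation by parts then gives
  \<open>\<phi> \<circ> L\<^sup>* = 0\<close>. Hence \<open>\<phi> \<circ> (L\<^sup>* + \<lambda>)\<^sup>2 = \<lambda>\<^sup>2 \<phi>\<close>, and \<open>\<phi>(u\<^sup>*\<^sub>j) = 1\<close> gives every column sum \<open>\<lambda>\<^sup>2\<close>.\<close>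

lemma sum_tridiagonal_detailed_balance_eq_0:
  fixes b c k f :: "nat \<Rightarrow> 'a::comm_ring"
  assumes "b d = 0" and "c 0 = 0"
    and balance: "\<And>i. 1 \<le> i \<Longrightarrow> i \<le> d \<Longrightarrow> k i * c i = k (i - 1) * b (i - 1)"
  shows "(\<Sum>i\<le>d. k i * (b i * f (i + 1) + (- b i - c i) * f i + c i * f (i - 1))) = 0"
proof -
  have up: "(\<Sum>i\<le>d. k i * b i * (f (i + 1) - f i)) = (\<Sum>i<d. k i * b i * (f (i + 1) - f i))"
    using \<open>b d = 0\<close> by (simp add: lessThan_Suc_atMost[symmetric])
  have "(\<Sum>i\<le>d. k i * c i * (f (i - 1) - f i)) = (\<Sum>i<d. k (Suc i) * c (Suc i) * (f i - f (Suc i)))"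
    using \<open>c 0 = 0\<close> by (simp add: lessThan_Suc_atMost[symmetric] sum.lessThan_Suc_shift del: sum.lessThan_Suc)
  also have "\<dots> = (\<Sum>i<d. k i * b i * (f i - f (i + 1)))"
    by (rule sum.cong) (use balance[of "Suc _"] in auto)
  finally have down: "(\<Sum>i\<le>d. k i * c i * (f (i - 1) - f i)) = - (\<Sum>i<d. k i * b i * (f (i + 1) - f i))"
    by (simp add: sum_negf[symmetric] algebra_simps)
  have "(\<Sum>i\<le>d. k i * (b i * f (i + 1) + (- b i - c i) * f i + c i * f (i - 1)))
      = (\<Sum>i\<le>d. k i * b i * (f (i + 1) - f i)) + (\<Sum>i\<le>d. k i * c i * (f (i - 1) - f i))"
    by (simp add: sum.distrib[symmetric] algebra_simps)
  then show ?thesis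
    unfolding up down by simp
qed

lemma poly_lagrange_interpolant:
  fixes x v :: "nat \<Rightarrow> 'a::field"
  assumes "inj_on x {..d}" and "k \<le> d"
  shows "poly (\<Sum>i\<le>d. smult (v i / (\<Prod>m\<in>{..d} - {i}. x i - x m)) (\<Prod>m\<in>{..d} - {i}. [:- x m, 1:])) (x k)
       = v k"
proof -
  have vanish: "(\<Prod>m\<in>{..d} - {i}. x k - x m) = 0" if "i \<le> d" "i \<noteq> k" for i
    using that assms(2) by (intro prod_zero) (auto intro!: bexI[of _ k])
  have nonzero: "(\<Prod>m\<in>{..d} - {k}. x k - x m) \<noteq> 0"
    using assms by (auto simp: prod_zero_iff inj_on_def)
  have "poly (\<Sum>i\<le>d. smult (v i / (\<Prod>m\<in>{..d} - {i}. x i - x m)) (\<Prod>m\<in>{..d} - {i}. [:- x m, 1:])) (x k)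
      = (\<Sum>i\<le>d. v i / (\<Prod>m\<in>{..d} - {i}. x i - x m) * (\<Prod>m\<in>{..d} - {i}. x k - x m))"
    by (simp add: poly_sum poly_prod)
  also have "\<dots> = v k / (\<Prod>m\<in>{..d} - {k}. x k - x m) * (\<Prod>m\<in>{..d} - {k}. x k - x m)"
    by (subst sum.remove[of _ k]) (use vanish assms(2) in \<open>auto intro!: sum.neutral\<close>)
  also have "\<dots> = v k"
    using nonzero by simp
  finally show ?thesis .
qed

lemma theta_strict_antimono:
  assumes "r > -1" and "s > -1" and "i < j" and "j \<le> d"
  shows "theta d r s j < theta d r s i"
proof -
  define x y where "x = real (d - i)" and "y = real (d - j)"
  have "x \<ge> 1" "0 \<le> y" "y < x"
    using assms by (auto simp: x_def y_def)
  then have "(x - y) * (x + y + r + s + 1) > 0"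
    using assms(1,2) by (intro mult_pos_pos) linarith+
  moreover have "x * (x + r + s + 1) - y * (y + r + s + 1) = (x - y) * (x + y + r + s + 1)"
    by algebra
  ultimately show ?thesis
    unfolding theta_def x_def[symmetric] y_def[symmetric] by linarith
qed

lemma inj_on_theta:
  assumes "r > -1" and "s > -1"
  shows "inj_on (theta d r s) {..d}"
proof (rule inj_onI, rule ccontr)
  fix i j assume "i \<in> {..d}" "j \<in> {..d}" "theta d r s i = theta d r s j" "i \<noteq> j"
  then show False
    using theta_strict_antimono[OF assms, of i j d] theta_strict_antimono[OF assms, of j i d]
    by (cases "i < j") auto
qed

lemma poly_interp_theta:
  assumes "r > -1" and "s > -1" and "k \<le> d"
  shows "poly (interp d r s v) (theta d r s k) = v k"
  unfolding interp_def by (rule poly_lagrange_interpolant[OF inj_on_theta[OF assms(1,2)] assms(3)])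

lemma bS_nonzero:
  assumes "r > -1" and "s > -1" and "i < d"
  shows "bS d r s i \<noteq> 0"
proof -
  have "real (d - i) \<ge> 1"
    using assms(3) by simp
  then have "pochhammer (2 * real (d - i) + r + s + 2) i > 0"
    and "pochhammer (2 * real (d - i) + r + s) (i + 1) > 0"
    using assms(1,2) by (auto intro!: pochhammer_pos)
  moreover have "real i - real d - s < 0"
    using assms by simp
  ultimately show ?thesis
    using assms(3) unfolding bS_def by auto
qed

lemma cS_nonzero:
  assumes "r > -1" and "s > -1" and "1 \<le> i" and "i \<le> d"
  shows "cS d r s i \<noteq> 0"
proof -
  have "pochhammer (real (d - i) + r + s + 1) (d - i) > 0"
    using assms by (cases "d = i") (auto intro!: pochhammer_pos)
  moreover have "pochhammer (real (d - i) + r + s + 2) (d - i + 1) > 0"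
    using assms by (intro pochhammer_pos) auto
  moreover have "real i - real d - r - 1 < 0"
    using assms by simp
  ultimately show ?thesis
    using assms(3,4) unfolding cS_def by auto
qed

lemma kS_nonzero:
  assumes "r > -1" and "s > -1" and "i \<le> d"
  shows "kS d r s i \<noteq> 0"
  using assms bS_nonzero[OF assms(1,2)] cS_nonzero[OF assms(1,2)]
  by (auto simp: kS_def prod_zero_iff)

lemma kS_detailed_balance:
  assumes "r > -1" and "s > -1" and "1 \<le> i" and "i \<le> d"
  shows "kS d r s i * cS d r s i = kS d r s (i - 1) * bS d r s (i - 1)"
proof -
  obtain m where "i = Suc m"
    using assms(3) by (cases i) auto
  then show ?thesis
    using cS_nonzero[OF assms] by (simp add: kS_def)
qed

lemma nu_nonzero:
  assumes "r > -1" and "s > -1"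
  shows "nu d r s \<noteq> 0"
proof -
  have "theta d r s 0 \<noteq> theta d r s j" if "j \<in> {1..d}" for j
    using theta_strict_antimono[OF assms, of 0 j d] that by auto
  moreover have "cc r j \<noteq> 0" if "j \<in> {1..d}" for j
    using that assms unfolding cc_def by auto
  ultimately show ?thesis
    unfolding nu_def by (auto simp: prod_zero_iff)
qed

definition coord_sum :: "nat \<Rightarrow> real \<Rightarrow> real \<Rightarrow> real poly \<Rightarrow> real" where
  "coord_sum d r s f = (\<Sum>i\<le>d. kS d r s i * poly f (theta d r s i)) / nu d r s"

lemma coord_sum_add: "coord_sum d r s (f + g) = coord_sum d r s f + coord_sum d r s g"
  unfolding coord_sum_def by (simp add: sum.distrib algebra_simps add_divide_distrib)

lemma coord_sum_smult: "coord_sum d r s (smult a f) = a * coord_sum d r s f"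
  unfolding coord_sum_def by (simp add: sum_distrib_left algebra_simps)

lemma coord_sum_sum: "coord_sum d r s (\<Sum>i\<in>A. f i) = (\<Sum>i\<in>A. coord_sum d r s (f i))"
  unfolding coord_sum_def by (simp add: poly_sum sum_distrib_left sum_divide_distrib sum.swap[of _ A])

lemma coord_sum_Lstar:
  assumes "r > -1" and "s > -1"
  shows "coord_sum d r s (Lstar d r s f) = 0"
proof -
  have "(\<Sum>i\<le>d. kS d r s i * poly (Lstar d r s f) (theta d r s i))
      = (\<Sum>i\<le>d. kS d r s i * (bS d r s i * poly f (theta d r s (i + 1))
          + (- bS d r s i - cS d r s i) * poly f (theta d r s i)
          + cS d r s i * poly f (theta d r s (i - 1))))"
    unfolding Lstar_def by (rule sum.cong) (auto simp: poly_interp_theta[OF assms] aS_def thetaS_def)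
  also have "\<dots> = 0"
    by (rule sum_tridiagonal_detailed_balance_eq_0)
      (simp add: bS_def, simp add: cS_def, rule kS_detailed_balance[OF assms])
  finally show ?thesis
    unfolding coord_sum_def by simp
qed

lemma coord_sum_Lplus:
  assumes "r > -1" and "s > -1"
  shows "coord_sum d r s (Lplus d r s lam f) = lam * coord_sum d r s f"
  unfolding Lplus_def coord_sum_add coord_sum_smult coord_sum_Lstar[OF assms] by simp

lemma coord_sum_uS:
  assumes "r > -1" and "s > -1" and "j \<le> d"
  shows "coord_sum d r s (uS d r s j) = 1"
proof -
  have "(\<Sum>i\<le>d. kS d r s i * poly (uS d r s j) (theta d r s i))
      = (\<Sum>i\<le>d. kS d r s i * (if i = j then nu d r s / kS d r s i else 0))"
    unfolding uS_def by (rule sum.cong) (auto simp: poly_interp_theta[OF assms(1,2)])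
  also have "\<dots> = nu d r s"
    using assms(3) kS_nonzero[OF assms] by (simp add: if_distrib cong: if_cong)
  finally show ?thesis
    unfolding coord_sum_def using nu_nonzero[OF assms(1,2)] by simp
qed

theorem lemma2p4:
  fixes d :: nat and r s lam :: real and M :: "nat \<Rightarrow> nat \<Rightarrow> real"
  assumes "r > -1" and "s > -1"
    and "\<forall>j\<le>d. Lplus d r s lam (Lplus d r s lam (uS d r s j))
                 = (\<Sum>i\<le>d. smult (M i j) (uS d r s i))"
  shows "\<forall>j\<le>d. (\<Sum>i\<le>d. M i j) = lam ^ 2"
proof (intro allI impI)
  fix j assume "j \<le> d"
  have "lam ^ 2 = coord_sum d r s (Lplus d r s lam (Lplus d r s lam (uS d r s j)))"
    using \<open>j \<le> d\<close> by (simp add: coord_sum_Lplus[OF assms(1,2)] coord_sum_uS[OF assms(1,2)] power2_eq_square)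
  also have "\<dots> = coord_sum d r s (\<Sum>i\<le>d. smult (M i j) (uS d r s i))"
    using assms(3) \<open>j \<le> d\<close> by simp
  also have "\<dots> = (\<Sum>i\<le>d. M i j)"
    by (simp add: coord_sum_sum coord_sum_smult coord_sum_uS[OF assms(1,2)])
  finally show "(\<Sum>i\<le>d. M i j) = lam ^ 2" ..
qed

end
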